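(* Consider the dynamic load balancing game described in the context, and suppose all players follow the best-response algorithm. Then after $$t''=O\!\left(\max_j\left\lceil\frac{s_j^0}{\mu_j}\right\rceil\cdot\frac{\sum_j\mu_j+\sum_j s_j^0}{\sum_j\mu_j-\lambda_{\max}}\right)$$ iterations, the state of each server becomes zero (the system becomes load-balanced), and it remains zero thereafter. In particular, the strategies of the players converge to the pure Nash equilibrium of the static load balancing game with zero initial loads, i.e., $\lim_{t\to\infty}a_{ij}^t=\frac{\mu_j}{\sum_{k=1}^m\mu_k}$ for every player $i$ and server $j$.
   Context: Dynamic load balancing game: there are $m$ servers with service rates $\mu_j>0$ and $n$ players with job lengths $\lambda_i>0$; let $\lambda_{\max}=\max_i\lambda_i$, and assume $\lambda_{\max}<\sum_{j=1}^m\mu_j$. Time is discrete, $t=0,1,2,\dots$; the state at time $t$ is $s^t=(s_1^t,\dots,s_m^t)$, $s_j^t\ge0$ the load on server $j$, with given initial state $s^0$. At each time $t$ exactly one player $i$ receives a new job of length $\lambda_i$ and immediately chooses $a_i^t$ in the simplex $\{a:\sum_ja_j=1,a_j\ge0\}$, incurring cost $$D_i(a^t,s^t)=\sum_{j=1}^m\lambda_i a_{ij}^t\left(\frac{\lambda_i a_{ij}^t}{2\mu_j}+\frac{s_j^t}{\mu_j}\right),$$ after which $s_j^{t+1}=\max\{0,\ s_j^t+\lambda_i a_{ij}^t-\mu_j\}$ for all $j$. Best-response algorithm: the player receiving the job at time $t$ chooses $a_i^t$ as the unique minimizer of $D_i(a_i,s^t)$ over the simplex. The static load balancing game with zero initial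 loads is the game in which each player $i$ chooses $a_i$ in the simplex to minimize $\sum_j\lambda_ia_{ij}\big(\frac{\lambda_ia_{ij}}{2\mu_j}+\frac{\sum_{k\ne i}\lambda_ka_{kj}}{\mu_j}\big)$. *)

theory Defs
  imports Complex_Main
begin

text \<open>Servers are indexed by {..<m}, players by {..<n}. Strategies are functions
  nat => real, required to vanish outside the server set.\<close>

definition simplex :: "nat \<Rightarrow> (nat \<Rightarrow> real) set" where
  "simplex m = {a. (\<forall>j<m. a j \<ge> 0) \<and> (\<forall>j\<ge>m. a j = 0) \<and> (\<Sum>j<m. a j) = 1}"

definition dyn_cost :: "nat \<Rightarrow> (nat \<Rightarrow> real) \<Rightarrow> real \<Rightarrow> (nat \<Rightarrow> real) \<Rightarrow> (nat \<Rightarrow> real) \<Rightarrow> real" where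
  "dyn_cost m mu lam a s = (\<Sum>j<m. lam * a j * (lam * a j / (2 * mu j) + s j / mu j))"

text \<open>Best response: the (unique) minimizer of the dynamic cost over the simplex.\<close>
definition best_resp :: "nat \<Rightarrow> (nat \<Rightarrow> real) \<Rightarrow> real \<Rightarrow> (nat \<Rightarrow> real) \<Rightarrow> (nat \<Rightarrow> real)" where
  "best_resp m mu lam s =
     (THE a. a \<in> simplex m \<and> (\<forall>b\<in>simplex m. dyn_cost m mu lam a s \<le> dyn_cost m mu lam b s))"

text \<open>State trajectory under best responses; p t is the player receiving the job at time t.\<close>
fun br_state :: "nat \<Rightarrow> (nat \<Rightarrow> real) \<Rightarrow> (nat \<Rightarrow> real) \<Rightarrow> (nat \<Rightarrow> nat) \<Rightarrow> (nat \<Rightarrow> real)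
                  \<Rightarrow> nat \<Rightarrow> (nat \<Rightarrow> real)" where
  "br_state m mu lam p s0 0 = s0"
| "br_state m mu lam p s0 (Suc t) =
     (let s = br_state m mu lam p s0 t; a = best_resp m mu (lam (p t)) s
      in (\<lambda>j. max 0 (s j + lam (p t) * a j - mu j)))"

definition br_action :: "nat \<Rightarrow> (nat \<Rightarrow> real) \<Rightarrow> (nat \<Rightarrow> real) \<Rightarrow> (nat \<Rightarrow> nat) \<Rightarrow> (nat \<Rightarrow> real)
                  \<Rightarrow> nat \<Rightarrow> (nat \<Rightarrow> real)" where
  "br_action m mu lam p s0 t = best_resp m mu (lam (p t)) (br_state m mu lam p s0 t)"

definition static_cost :: "nat \<Rightarrow> nat \<Rightarrow> (nat \<Rightarrow> real) \<Rightarrow> (nat \<Rightarrow> real) \<Rightarrow> (nat \<Rightarrow> nat \<Rightarrow> real)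
                            \<Rightarrow> nat \<Rightarrow> real" where
  "static_cost m n mu lam a i =
     (\<Sum>j<m. lam i * a i j * (lam i * a i j / (2 * mu j)
              + (\<Sum>k\<in>{..<n}-{i}. lam k * a k j) / mu j))"

definition static_nash :: "nat \<Rightarrow> nat \<Rightarrow> (nat \<Rightarrow> real) \<Rightarrow> (nat \<Rightarrow> real) \<Rightarrow> (nat \<Rightarrow> nat \<Rightarrow> real) \<Rightarrow> bool" where
  "static_nash m n mu lam a \<longleftrightarrow>
     (\<forall>i<n. a i \<in> simplex m \<and>
        (\<forall>b\<in>simplex m. static_cost m n mu lam a i \<le> static_cost m n mu lam (a(i := b)) i))"

end

theory Submission imports Defs begin

text \<open>A best response is water-filling: the job raises the servers to a common normalized
  level w, so that s_j + lam a_j = max s_j (w mu_j). If s_j \<le> B mu_j for all j, then either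
  w \<le> B, or every server is flooded and w M = \<Sum>s_j + lam \<le> B M + lam with M = \<Sum>mu_j; in both
  cases the next state is at most max 0 (B - (1 - lam_max / M)) mu_j. Starting from
  B = max_j \<lceil>s_j^0 / mu_j\<rceil>, the state therefore vanishes after B M / (M - lam_max) steps and
  stays zero. From the zero state every best response is a_j = mu_j / M, and this profile is a
  Nash equilibrium of the static game because the loads of the other players are then
  proportional to the service rates as well.\<close>

text \<open>The KKT conditions for minimizing dyn_cost over the simplex; w is the multiplier of the
  constraint \<Sum>a_j = 1.\<close>

definition water_level :: "nat \<Rightarrow> (nat \<Rightarrow> real) \<Rightarrow> real \<Rightarrow> (nat \<Rightarrow> real) \<Rightarrow> (nat \<Rightarrow> real) \<Rightarrow> real \<Rightarrow> bool" where
  "water_level m mu lam s a w \<longleftrightarrow>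
     (\<forall>j<m. w * mu j \<le> lam * a j + s j \<and> (0 < a j \<longrightarrow> lam * a j + s j = w * mu j))"

definition proportional_share :: "nat \<Rightarrow> (nat \<Rightarrow> real) \<Rightarrow> nat \<Rightarrow> real" where
  "proportional_share m mu = (\<lambda>j. if j < m then mu j / (\<Sum>k<m. mu k) else 0)"

lemma sum_service_rates_pos:
  fixes m :: nat
  assumes "1 \<le> m" and "\<forall>j<m. 0 < mu j"
  shows "0 < (\<Sum>j<m. mu j :: real)"
  using assms by (intro sum_pos) (auto simp: lessThan_empty_iff)

lemma dyn_cost_sub_ge_of_water_level:
  assumes a: "a \<in> simplex m" and b: "b \<in> simplex m" and mu: "\<forall>j<m. 0 < mu j" and lam: "0 < lam"
    and w: "water_level m mu lam s a w"
  shows "(\<Sum>j<m. lam\<^sup>2 * (b j - a j)\<^sup>2 / (2 * mu j))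
           \<le> dyn_cost m mu lam b s - dyn_cost m mu lam a s"
proof -
  have term_ge: "lam * w * (b j - a j) + lam\<^sup>2 * (b j - a j)\<^sup>2 / (2 * mu j)
      \<le> lam * b j * (lam * b j / (2 * mu j) + s j / mu j) - lam * a j * (lam * a j / (2 * mu j) + s j / mu j)"
    if j: "j < m" for j
  proof -
    have mj: "0 < mu j" using mu j by simp
    have "w * (b j - a j) \<le> (lam * a j + s j) / mu j * (b j - a j)"
    proof (cases "0 < a j")
      case True
      with w j mj show ?thesis by (simp add: water_level_def)
    next
      case False
      then have "a j = 0" using a j by (force simp: simplex_def)
      moreover have "0 \<le> b j" using b j by (simp add: simplex_def)
      moreover have "w \<le> (lam * a j + s j) / mu j"
        using w j mj by (simp add: water_level_def pos_le_divide_eq)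
      ultimately show ?thesis using mult_right_mono[of w "(lam * a j + s j) / mu j" "b j"] by simp
    qed
    then have "lam * w * (b j - a j) \<le> lam * ((lam * a j + s j) / mu j * (b j - a j))"
      using mult_left_mono[OF _ less_imp_le[OF lam]] by (simp only: mult.assoc)
    also have "\<dots> + lam\<^sup>2 * (b j - a j)\<^sup>2 / (2 * mu j)
        = lam * b j * (lam * b j / (2 * mu j) + s j / mu j) - lam * a j * (lam * a j / (2 * mu j) + s j / mu j)"
      using mj by (simp add: field_simps power2_eq_square)
    finally show ?thesis by simp
  qed
  have sums: "(\<Sum>j<m. b j) = 1" "(\<Sum>j<m. a j) = 1" using a b by (auto simp: simplex_def)
  have "(\<Sum>j<m. lam\<^sup>2 * (b j - a j)\<^sup>2 / (2 * mu j))
      = lam * w * ((\<Sum>j<m. b j) - (\<Sum>j<m. a j)) + (\<Sum>j<m. lam\<^sup>2 * (b j - a j)\<^sup>2 / (2 * mu j))"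
    using sums by simp
  also have "\<dots> = (\<Sum>j<m. lam * w * (b j - a j) + lam\<^sup>2 * (b j - a j)\<^sup>2 / (2 * mu j))"
    by (simp add: sum.distrib sum_distrib_left sum_subtractf right_diff_distrib)
  also have "\<dots> \<le> dyn_cost m mu lam b s - dyn_cost m mu lam a s"
    unfolding dyn_cost_def sum_subtractf[symmetric] by (rule sum_mono) (use term_ge in auto)
  finally show ?thesis .
qed

lemma dyn_cost_le_of_water_level:
  assumes "a \<in> simplex m" and "b \<in> simplex m" and mu: "\<forall>j<m. 0 < mu j" and "0 < lam"
    and "water_level m mu lam s a w"
  shows "dyn_cost m mu lam a s \<le> dyn_cost m mu lam b s"
proof -
  have "0 \<le> (\<Sum>j<m. lam\<^sup>2 * (b j - a j)\<^sup>2 / (2 * mu j))"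
    using mu by (intro sum_nonneg) auto
  with dyn_cost_sub_ge_of_water_level[OF assms] show ?thesis by linarith
qed

lemma best_resp_eq_of_water_level:
  assumes a: "a \<in> simplex m" and mu: "\<forall>j<m. 0 < mu j" and lam: "0 < lam"
    and w: "water_level m mu lam s a w"
  shows "best_resp m mu lam s = a"
  unfolding best_resp_def
proof (rule the_equality)
  show "a \<in> simplex m \<and> (\<forall>b\<in>simplex m. dyn_cost m mu lam a s \<le> dyn_cost m mu lam b s)"
    using a dyn_cost_le_of_water_level[OF a _ mu lam w] by blast
next
  fix b assume "b \<in> simplex m \<and> (\<forall>c\<in>simplex m. dyn_cost m mu lam b s \<le> dyn_cost m mu lam c s)"
  then have b: "b \<in> simplex m" and "dyn_cost m mu lam b s \<le> dyn_cost m mu lam a s"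
    using a by auto
  then have "(\<Sum>j<m. lam\<^sup>2 * (b j - a j)\<^sup>2 / (2 * mu j)) \<le> 0"
    using dyn_cost_sub_ge_of_water_level[OF a b mu lam w] by linarith
  moreover have "\<forall>j\<in>{..<m}. 0 \<le> lam\<^sup>2 * (b j - a j)\<^sup>2 / (2 * mu j)"
    using mu by auto
  ultimately have "\<forall>j\<in>{..<m}. lam\<^sup>2 * (b j - a j)\<^sup>2 / (2 * mu j) = 0"
    using sum_nonneg_eq_0_iff[of "{..<m}"] by (metis (no_types, lifting) antisym finite_lessThan sum_nonneg)
  then have "\<forall>j<m. b j = a j" using mu lam by force
  moreover have "\<forall>j\<ge>m. b j = a j" using a b by (simp add: simplex_def)
  ultimately show "b = a" by (metis linorder_not_le ext)
qed

lemma exists_water_level_sum: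
  fixes m :: nat and mu s :: "nat \<Rightarrow> real"
  assumes m: "1 \<le> m" and mu: "\<forall>j<m. 0 < mu j" and lam: "0 < lam" and s: "\<forall>j<m. 0 \<le> s j"
  obtains w where "(\<Sum>j<m. max (s j) (w * mu j)) = (\<Sum>j<m. s j) + lam"
proof -
  define f where "f w = (\<Sum>j<m. max (s j) (w * mu j))" for w
  define M where "M = (\<Sum>j<m. mu j)"
  define W where "W = ((\<Sum>j<m. s j) + lam) / M"
  have M: "0 < M" unfolding M_def by (rule sum_service_rates_pos[OF m mu])
  have "f 0 = (\<Sum>j<m. s j)" unfolding f_def using s by (intro sum.cong) auto
  then have f0: "f 0 \<le> (\<Sum>j<m. s j) + lam" using lam by simp
  have "(\<Sum>j<m. s j) + lam = W * M" using M by (simp add: W_def)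
  also have "\<dots> = (\<Sum>j<m. W * mu j)" by (simp add: M_def sum_distrib_left)
  also have "\<dots> \<le> f W" unfolding f_def by (rule sum_mono) simp
  finally have fW: "(\<Sum>j<m. s j) + lam \<le> f W" .
  have "0 \<le> W" unfolding W_def using M lam s by (intro divide_nonneg_pos add_nonneg_nonneg sum_nonneg) auto
  moreover have "continuous_on {0..W} f" unfolding f_def by (intro continuous_intros)
  ultimately obtain w where "f w = (\<Sum>j<m. s j) + lam"
    using IVT'[of f 0 _ W] f0 fW by auto
  then show ?thesis using that unfolding f_def by blast
qed

lemma best_resp_water_filling:
  fixes m :: nat and mu s :: "nat \<Rightarrow> real"
  assumes m: "1 \<le> m" and mu: "\<forall>j<m. 0 < mu j" and lam: "0 < lam" and s: "\<forall>j<m. 0 \<le> s j"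
  obtains w where "\<forall>j<m. s j + lam * best_resp m mu lam s j = max (s j) (w * mu j)"
    and "(\<Sum>j<m. max (s j) (w * mu j)) = (\<Sum>j<m. s j) + lam"
proof -
  obtain w where w: "(\<Sum>j<m. max (s j) (w * mu j)) = (\<Sum>j<m. s j) + lam"
    using exists_water_level_sum[OF m mu lam s] .
  define a where "a j = (if j < m then (max (s j) (w * mu j) - s j) / lam else 0)" for j
  have "(\<Sum>j<m. a j) = (\<Sum>j<m. max (s j) (w * mu j) - s j) / lam"
    unfolding a_def by (simp add: sum_divide_distrib)
  also have "\<dots> = 1" using w lam by (simp add: sum_subtractf)
  finally have "a \<in> simplex m" using lam by (auto simp: simplex_def a_def)
  moreover have fill: "\<forall>j<m. lam * a j + s j = max (s j) (w * mu j)" using lam by (simp add: a_def)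
  moreover have "water_level m mu lam s a w"
    unfolding water_level_def
  proof (intro allI impI conjI)
    fix j assume j: "j < m"
    then show "w * mu j \<le> lam * a j + s j" using fill by simp
    assume "0 < a j"
    then have "s j < max (s j) (w * mu j)" using j lam by (simp add: a_def zero_less_divide_iff)
    then show "lam * a j + s j = w * mu j" using fill j by (simp add: max_def split: if_splits)
  qed
  ultimately have "\<forall>j<m. s j + lam * best_resp m mu lam s j = max (s j) (w * mu j)"
    using best_resp_eq_of_water_level[OF _ mu lam] by (metis add.commute)
  with w show ?thesis using that by blast
qed

lemma best_resp_next_load_le:
  fixes m :: nat and mu s :: "nat \<Rightarrow> real"
  assumes m: "1 \<le> m" and mu: "\<forall>j<m. 0 < mu j" and lam: "0 < lam" and s: "\<forall>j<m. 0 \<le> s j"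
    and sB: "\<forall>j<m. s j \<le> B * mu j" and j: "j < m"
  shows "max 0 (s j + lam * best_resp m mu lam s j - mu j)
           \<le> max 0 (B + lam / (\<Sum>k<m. mu k) - 1) * mu j"
proof -
  define M where "M = (\<Sum>k<m. mu k)"
  have M: "0 < M" unfolding M_def by (rule sum_service_rates_pos[OF m mu])
  have mj: "0 < mu j" using mu j by simp
  obtain w where fill: "\<forall>j<m. s j + lam * best_resp m mu lam s j = max (s j) (w * mu j)"
    and w: "(\<Sum>j<m. max (s j) (w * mu j)) = (\<Sum>j<m. s j) + lam"
    using best_resp_water_filling[OF m mu lam s] .
  have "max (s j) (w * mu j) - mu j \<le> (B + lam / M - 1) * mu j"
  proof (cases "w \<le> B")
    case True
    then have "max (s j) (w * mu j) \<le> B * mu j" using sB j mj by (simp add: mult_right_mono)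
    moreover have "0 \<le> lam / M * mu j" using lam M mj by simp
    ultimately show ?thesis by (simp add: algebra_simps)
  next
    case False
    have flooded: "max (s k) (w * mu k) = w * mu k" if k: "k < m" for k
      using sB k mult_right_mono[of B w "mu k"] False mu by fastforce
    then have "w * M = (\<Sum>j<m. s j) + lam"
      using w by (simp add: M_def sum_distrib_left)
    also have "\<dots> \<le> B * M + lam"
      using sum_mono[of "{..<m}" s "\<lambda>j. B * mu j"] sB by (simp add: M_def sum_distrib_left)
    finally have "w \<le> B + lam / M" using M by (simp add: field_simps)
    then have "(w - 1) * mu j \<le> (B + lam / M - 1) * mu j" using mj by (simp add: mult_right_mono)
    then show ?thesis using flooded[OF j] by (simp add: left_diff_distrib)
  qed
  also have "\<dots> \<le> max 0 (B + lam / M - 1) * mu j" using mj by (simp add: mult_right_mono)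
  finally show ?thesis using fill j mj unfolding M_def by simp
qed

lemma br_state_nonneg:
  assumes "\<forall>j<m. 0 \<le> s0 j" and "j < m"
  shows "0 \<le> br_state m mu lam p s0 t j"
  using assms by (cases t) (simp_all add: Let_def)

lemma br_state_le:
  fixes m :: nat and mu s0 :: "nat \<Rightarrow> real"
  assumes m: "1 \<le> m" and mu: "\<forall>j<m. 0 < mu j" and s0: "\<forall>j<m. 0 \<le> s0 j"
    and lam_pos: "\<forall>t. 0 < lam (p t)" and lam_le: "\<forall>t. lam (p t) \<le> L" and L: "L \<le> (\<Sum>j<m. mu j)"
    and K: "\<forall>j<m. s0 j \<le> K * mu j"
  shows "\<forall>j<m. br_state m mu lam p s0 t j \<le> max 0 (K - real t * (1 - L / (\<Sum>j<m. mu j))) * mu j"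
proof (induction t)
  case 0
  have "K * mu j \<le> max 0 K * mu j" if "j < m" for j
    using mu that by (simp add: mult_right_mono)
  then show ?case using K by (simp, meson order_trans)
next
  case (Suc t)
  define M where "M = (\<Sum>j<m. mu j)"
  define B where "B = max 0 (K - real t * (1 - L / M))"
  have M: "0 < M" unfolding M_def by (rule sum_service_rates_pos[OF m mu])
  have "B + lam (p t) / M - 1 \<le> K - real (Suc t) * (1 - L / M) \<or> B + lam (p t) / M - 1 \<le> 0"
  proof -
    have "lam (p t) / M \<le> L / M" "L / M \<le> 1"
      using lam_le L M by (simp_all add: divide_right_mono M_def)
    then show ?thesis unfolding B_def by (auto simp: algebra_simps max_def)
  qed
  then have contraction: "max 0 (B + lam (p t) / M - 1) \<le> max 0 (K - real (Suc t) * (1 - L / M))"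
    by auto
  show ?case
  proof (intro allI impI)
    fix j assume j: "j < m"
    have "br_state m mu lam p s0 (Suc t) j
        = max 0 (br_state m mu lam p s0 t j + lam (p t) * best_resp m mu (lam (p t)) (br_state m mu lam p s0 t) j - mu j)"
      by (simp add: Let_def)
    also have "\<dots> \<le> max 0 (B + lam (p t) / M - 1) * mu j"
      using best_resp_next_load_le[OF m mu lam_pos[rule_format] _ _ j] br_state_nonneg[OF s0] Suc.IH
      unfolding B_def M_def by blast
    also have "\<dots> \<le> max 0 (K - real (Suc t) * (1 - L / M)) * mu j"
      using contraction mu j by (simp add: mult_right_mono)
    finally show "br_state m mu lam p s0 (Suc t) j \<le> max 0 (K - real (Suc t) * (1 - L / (\<Sum>j<m. mu j))) * mu j"
      unfolding M_def .
  qed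
qed

lemma br_state_eq_zero:
  fixes m :: nat and mu s0 :: "nat \<Rightarrow> real"
  assumes m: "1 \<le> m" and mu: "\<forall>j<m. 0 < mu j" and s0: "\<forall>j<m. 0 \<le> s0 j"
    and lam_pos: "\<forall>t. 0 < lam (p t)" and lam_le: "\<forall>t. lam (p t) \<le> L" and L: "L \<le> (\<Sum>j<m. mu j)"
    and K: "\<forall>j<m. s0 j \<le> K * mu j" and t: "K \<le> real t * (1 - L / (\<Sum>j<m. mu j))"
    and j: "j < m"
  shows "br_state m mu lam p s0 t j = 0"
proof -
  have "max 0 (K - real t * (1 - L / (\<Sum>j<m. mu j))) = 0" using t by simp
  then have "br_state m mu lam p s0 t j \<le> 0"
    using br_state_le[of m mu s0 lam p L K t, OF m mu s0 lam_pos lam_le L K] j by simp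
  with br_state_nonneg[OF s0 j] show ?thesis by (rule order_antisym[rotated])
qed

lemma le_Max_ceiling_ratio_mult:
  fixes s mu :: "nat \<Rightarrow> real"
  assumes "j < m" and "0 < mu j"
  shows "s j \<le> Max ((\<lambda>j. real_of_int \<lceil>s j / mu j\<rceil>) ` {..<m}) * mu j"
proof -
  have "real_of_int \<lceil>s j / mu j\<rceil> \<le> Max ((\<lambda>j. real_of_int \<lceil>s j / mu j\<rceil>) ` {..<m})"
    by (rule Max_ge) (use assms(1) in auto)
  then have "s j / mu j \<le> Max ((\<lambda>j. real_of_int \<lceil>s j / mu j\<rceil>) ` {..<m})"
    using le_of_int_ceiling order_trans by blast
  then show ?thesis using assms(2) by (simp add: pos_divide_le_eq)
qed

lemma proportional_share_in_simplex:
  fixes m :: nat and mu :: "nat \<Rightarrow> real"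
  assumes m: "1 \<le> m" and mu: "\<forall>j<m. 0 < mu j"
  shows "proportional_share m mu \<in> simplex m"
proof -
  have M: "0 < (\<Sum>k<m. mu k)" by (rule sum_service_rates_pos[OF m mu])
  have "(\<Sum>j<m. proportional_share m mu j) = (\<Sum>j<m. mu j) / (\<Sum>k<m. mu k)"
    unfolding sum_divide_distrib by (simp add: proportional_share_def)
  with M mu show ?thesis by (simp add: simplex_def proportional_share_def less_imp_le)
qed

lemma best_resp_zero_load:
  fixes m :: nat and mu s :: "nat \<Rightarrow> real"
  assumes m: "1 \<le> m" and mu: "\<forall>j<m. 0 < mu j" and lam: "0 < lam" and s: "\<forall>j<m. s j = 0"
  shows "best_resp m mu lam s = proportional_share m mu"
  by (rule best_resp_eq_of_water_level[OF proportional_share_in_simplex[OF m mu] mu lam,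
        where w = "lam / (\<Sum>k<m. mu k)"])
    (simp add: water_level_def proportional_share_def s)

lemma static_cost_fun_upd:
  "static_cost m n mu lam (a(i := b)) i
     = dyn_cost m mu (lam i) b (\<lambda>j. \<Sum>k\<in>{..<n}-{i}. lam k * a k j)"
proof -
  have "(\<Sum>k\<in>{..<n}-{i}. lam k * (a(i := b)) k j) = (\<Sum>k\<in>{..<n}-{i}. lam k * a k j)" for j
    by (rule sum.cong) auto
  then show ?thesis by (simp add: static_cost_def dyn_cost_def)
qed

lemma static_nash_proportional_share:
  fixes m :: nat and mu lam :: "nat \<Rightarrow> real"
  assumes m: "1 \<le> m" and mu: "\<forall>j<m. 0 < mu j" and lam: "\<forall>i<n. 0 < lam i"
  shows "static_nash m n mu lam (\<lambda>i. proportional_share m mu)"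
  unfolding static_nash_def
proof (intro allI impI conjI ballI)
  fix i assume i: "i < n"
  show "proportional_share m mu \<in> simplex m" by (rule proportional_share_in_simplex[OF m mu])
  fix b assume b: "b \<in> simplex m"
  define A where "A = (\<lambda>i::nat. proportional_share m mu)"
  define c where "c = (\<Sum>k\<in>{..<n}-{i}. lam k)"
  define M where "M = (\<Sum>k<m. mu k)"
  have others: "(\<Sum>k\<in>{..<n}-{i}. lam k * A k j) = c * proportional_share m mu j" for j
    by (simp add: A_def c_def sum_distrib_right)
  have "water_level m mu (lam i) (\<lambda>j. c * proportional_share m mu j) (A i) ((lam i + c) / M)"
    by (auto simp: water_level_def A_def proportional_share_def M_def add_divide_distrib distrib_right)
  then have "dyn_cost m mu (lam i) (A i) (\<lambda>j. c * proportional_share m mu j)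
      \<le> dyn_cost m mu (lam i) b (\<lambda>j. c * proportional_share m mu j)"
    using dyn_cost_le_of_water_level proportional_share_in_simplex[OF m mu] b mu lam i
    unfolding A_def by blast
  moreover have "static_cost m n mu lam (A(i := b')) i
      = dyn_cost m mu (lam i) b' (\<lambda>j. c * proportional_share m mu j)" for b'
    by (simp add: static_cost_fun_upd others)
  ultimately show "static_cost m n mu lam A i \<le> static_cost m n mu lam (A(i := b)) i"
    by (metis fun_upd_triv)
qed

lemma br_action_tendsto_of_zero_state:
  fixes m :: nat and mu :: "nat \<Rightarrow> real"
  assumes m: "1 \<le> m" and mu: "\<forall>j<m. 0 < mu j" and lam: "\<forall>t. 0 < lam (p t)"
    and balanced: "\<forall>t\<ge>T. \<forall>j<m. br_state m mu lam p s0 t j = 0"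
  shows "(\<lambda>t. br_action m mu lam p s0 t j) \<longlonglongrightarrow> proportional_share m mu j"
proof (rule tendsto_eventually, rule eventually_sequentiallyI)
  fix t assume "T \<le> t"
  then show "br_action m mu lam p s0 t j = proportional_share m mu j"
    using best_resp_zero_load[OF m mu] lam balanced by (simp add: br_action_def)
qed

lemma br_state_eq_zero_after_horizon:
  fixes m n :: nat and mu lam s0 :: "nat \<Rightarrow> real" and p :: "nat \<Rightarrow> nat"
  assumes m: "1 \<le> m" and mu: "\<forall>j<m. 0 < mu j" and lam: "\<forall>i<n. 0 < lam i"
    and s0: "\<forall>j<m. 0 \<le> s0 j" and p: "\<forall>t. p t < n" and LM: "Max (lam ` {..<n}) < (\<Sum>j<m. mu j)"
    and t: "Max ((\<lambda>j. real_of_int \<lceil>s0 j / mu j\<rceil>) ` {..<m})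
              * ((\<Sum>j<m. mu j) + (\<Sum>j<m. s0 j)) / ((\<Sum>j<m. mu j) - Max (lam ` {..<n})) \<le> real t"
    and j: "j < m"
  shows "br_state m mu lam p s0 t j = 0"
proof -
  define M where "M = (\<Sum>j<m. mu j)"
  define L where "L = Max (lam ` {..<n})"
  define K where "K = Max ((\<lambda>j. real_of_int \<lceil>s0 j / mu j\<rceil>) ` {..<m})"
  have M: "0 < M" unfolding M_def by (rule sum_service_rates_pos[OF m mu])
  have lam_le: "\<forall>t. lam (p t) \<le> L" using p by (auto simp: L_def)
  have lam_pos: "\<forall>t. 0 < lam (p t)" using p lam by blast
  have K: "\<forall>j<m. s0 j \<le> K * mu j" using mu le_Max_ceiling_ratio_mult by (simp add: K_def)
  have "0 \<le> K * mu 0" using K s0 m by (meson less_le_trans order_trans zero_less_one)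
  moreover have "0 < mu 0" using mu m by simp
  ultimately have K0: "0 \<le> K" by (simp add: zero_le_mult_iff)
  have "K * M / (M - L) \<le> K * (M + (\<Sum>j<m. s0 j)) / (M - L)"
    using K0 s0 LM by (intro divide_right_mono mult_left_mono) (auto simp: M_def L_def intro: sum_nonneg)
  then have "K * M \<le> real t * (M - L)"
    using t LM by (simp add: pos_divide_le_eq M_def L_def K_def)
  then have "K \<le> real t * (1 - L / M)" using M by (simp add: field_simps)
  moreover have "L \<le> M" using LM by (simp add: M_def L_def)
  ultimately show ?thesis
    using br_state_eq_zero[of m mu s0 lam p L K t j, OF m mu s0 lam_pos lam_le _ K _ j]
    unfolding M_def by simp
qed

lemma br_action_tendsto_proportional_share:
  fixes m n :: nat and mu lam s0 :: "nat \<Rightarrow> real" and p :: "nat \<Rightarrow> nat"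
  assumes m: "1 \<le> m" and mu: "\<forall>j<m. 0 < mu j" and lam: "\<forall>i<n. 0 < lam i"
    and s0: "\<forall>j<m. 0 \<le> s0 j" and p: "\<forall>t. p t < n" and LM: "Max (lam ` {..<n}) < (\<Sum>j<m. mu j)"
    and j: "j < m"
  shows "(\<lambda>t. br_action m mu lam p s0 t j) \<longlonglongrightarrow> mu j / (\<Sum>k<m. mu k)"
proof -
  define T where "T = Max ((\<lambda>j. real_of_int \<lceil>s0 j / mu j\<rceil>) ` {..<m})
              * ((\<Sum>j<m. mu j) + (\<Sum>j<m. s0 j)) / ((\<Sum>j<m. mu j) - Max (lam ` {..<n}))"
  have "T \<le> real t" if "nat \<lceil>T\<rceil> \<le> t" for t
    using that real_nat_ceiling_ge[of T] by linarith
  then have "\<forall>t\<ge>nat \<lceil>T\<rceil>. \<forall>j<m. br_state m mu lam p s0 t j = 0"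
    using br_state_eq_zero_after_horizon[OF m mu lam s0 p LM] unfolding T_def by blast
  moreover have "\<forall>t. 0 < lam (p t)" using p lam by blast
  ultimately have "(\<lambda>t. br_action m mu lam p s0 t j) \<longlonglongrightarrow> proportional_share m mu j"
    using br_action_tendsto_of_zero_state[OF m mu] by blast
  then show ?thesis using j by (simp add: proportional_share_def)
qed

theorem theorem4:
  "\<exists>C>0. \<forall>(m::nat) (n::nat) (mu::nat \<Rightarrow> real) (lam::nat \<Rightarrow> real) (s0::nat \<Rightarrow> real) (p::nat \<Rightarrow> nat).
     m \<ge> 1 \<and> n \<ge> 1 \<and> (\<forall>j<m. mu j > 0) \<and> (\<forall>i<n. lam i > 0) \<and> (\<forall>j<m. s0 j \<ge> 0)
     \<and> (\<forall>t. p t < n) \<and> Max (lam ` {..<n}) < (\<Sum>j<m. mu j)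
     \<longrightarrow>
       (\<forall>t::nat. real t \<ge> C * Max ((\<lambda>j. real_of_int \<lceil>s0 j / mu j\<rceil>) ` {..<m})
                     * ((\<Sum>j<m. mu j) + (\<Sum>j<m. s0 j)) / ((\<Sum>j<m. mu j) - Max (lam ` {..<n}))
           \<longrightarrow> (\<forall>j<m. br_state m mu lam p s0 t j = 0))
     \<and> static_nash m n mu lam (\<lambda>i j. if j < m then mu j / (\<Sum>k<m. mu k) else 0)
     \<and> (\<forall>j<m. (\<lambda>t. br_action m mu lam p s0 t j) \<longlonglongrightarrow> mu j / (\<Sum>k<m. mu k))"
  by (intro exI[of _ "1::real"])
    (auto intro: br_state_eq_zero_after_horizon br_action_tendsto_proportional_share
      static_nash_proportional_share[unfolded proportional_share_def])

end
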